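(* There exists a sequence of series-parallel weighted graphs $\{W_n\}_{n=1}^\infty$ such that (1) for each $n$ the underlying unweighted graph of $W_n$ contains the diamond $D_n$ as a subgraph, and (2) there exist $C<\infty$ and maps $f_n:V(W_n)\to\ell_2$ such that each $f_n$ is a bilipschitz embedding of $V(W_n)$ (with its weighted shortest path metric) with distortion at most $C$.
   Context: A weighted graph (positive edge weights) is series-parallel if it can be obtained as follows: start with an edge; in each step add a new vertex and join it to both end vertices of an already existing edge; at the end remove an arbitrary set of edges. A weighted graph is considered as the metric space on its vertices with the weighted shortest path distance. Diamonds: $D_0$ is an edge; $D_i$ is obtained from $D_{i-1}$ by replacing each edge $uv$ by a quadrilateral $u,a,v,b$. The distortion of a bilipschitz map $f$ is $\mathrm{Lip}(f)\cdot\mathrm{Lip}(f^{-1})$. *)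

theory Defs
  imports Complex_Main
begin

definition wgraph :: "'v set \<Rightarrow> 'v set set \<Rightarrow> ('v set \<Rightarrow> real) \<Rightarrow> bool" where
  "wgraph V E w \<longleftrightarrow> finite V \<and>
     (\<forall>e\<in>E. \<exists>u v. e = {u, v} \<and> u \<in> V \<and> v \<in> V \<and> u \<noteq> v) \<and>
     (\<forall>e\<in>E. w e > 0)"

definition walk :: "'v set set \<Rightarrow> 'v \<Rightarrow> 'v \<Rightarrow> 'v list \<Rightarrow> bool" where
  "walk E u v xs \<longleftrightarrow> xs \<noteq> [] \<and> hd xs = u \<and> last xs = v \<and>
     (\<forall>i < length xs - 1. {xs ! i, xs ! Suc i} \<in> E)"

definition walk_len :: "('v set \<Rightarrow> real) \<Rightarrow> 'v list \<Rightarrow> real" where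
  "walk_len w xs = (\<Sum>i < length xs - 1. w {xs ! i, xs ! Suc i})"

definition connected_graph :: "'v set \<Rightarrow> 'v set set \<Rightarrow> bool" where
  "connected_graph V E \<longleftrightarrow> (\<forall>u\<in>V. \<forall>v\<in>V. \<exists>xs. walk E u v xs)"

definition spdist :: "'v set set \<Rightarrow> ('v set \<Rightarrow> real) \<Rightarrow> 'v \<Rightarrow> 'v \<Rightarrow> real" where
  "spdist E w u v = Inf {walk_len w xs | xs. walk E u v xs}"

inductive sp_full :: "'v set \<Rightarrow> 'v set set \<Rightarrow> bool" where
  base: "a \<noteq> b \<Longrightarrow> sp_full {a, b} {{a, b}}"
| step: "sp_full V E \<Longrightarrow> {u, v} \<in> E \<Longrightarrow> x \<notin> V \<Longrightarrow>
          sp_full (insert x V) (E \<union> {{x, u}, {x, v}})"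

definition series_parallel :: "'v set \<Rightarrow> 'v set set \<Rightarrow> ('v set \<Rightarrow> real) \<Rightarrow> bool" where
  "series_parallel V E w \<longleftrightarrow> wgraph V E w \<and> (\<exists>E'. sp_full V E' \<and> E \<subseteq> E')"

inductive is_diamond :: "nat \<Rightarrow> 'v set \<Rightarrow> 'v set set \<Rightarrow> bool" where
  zero: "a \<noteq> b \<Longrightarrow> is_diamond 0 {a, b} {{a, b}}"
| suc: "is_diamond n V E \<Longrightarrow> inj_on p E \<Longrightarrow> inj_on q E \<Longrightarrow>
        p ` E \<inter> V = {} \<Longrightarrow> q ` E \<inter> V = {} \<Longrightarrow> p ` E \<inter> q ` E = {} \<Longrightarrow>
        is_diamond (Suc n) (V \<union> p ` E \<union> q ` E)
          (\<Union>e\<in>E. {{x, p e} | x. x \<in> e} \<union> {{x, q e} | x. x \<in> e})"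

definition contains_diamond :: "nat \<Rightarrow> 'v set \<Rightarrow> 'v set set \<Rightarrow> bool" where
  "contains_diamond n V E \<longleftrightarrow> (\<exists>V' E'. is_diamond n V' E' \<and> V' \<subseteq> V \<and> E' \<subseteq> E)"

definition ell2 :: "(nat \<Rightarrow> real) set" where
  "ell2 = {x. summable (\<lambda>i. (x i)\<^sup>2)}"

definition ell2_dist :: "(nat \<Rightarrow> real) \<Rightarrow> (nat \<Rightarrow> real) \<Rightarrow> real" where
  "ell2_dist x y = sqrt (\<Sum>i. (x i - y i)\<^sup>2)"

definition lip_set :: "('a \<Rightarrow> 'a \<Rightarrow> real) \<Rightarrow> 'a set \<Rightarrow> ('b \<Rightarrow> 'b \<Rightarrow> real) \<Rightarrow> ('a \<Rightarrow> 'b) \<Rightarrow> real set" where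
  "lip_set d X d' f = {d' (f x) (f y) / d x y | x y. x \<in> X \<and> y \<in> X \<and> x \<noteq> y}"

definition lipinv_set :: "('a \<Rightarrow> 'a \<Rightarrow> real) \<Rightarrow> 'a set \<Rightarrow> ('b \<Rightarrow> 'b \<Rightarrow> real) \<Rightarrow> ('a \<Rightarrow> 'b) \<Rightarrow> real set" where
  "lipinv_set d X d' f = {d x y / d' (f x) (f y) | x y. x \<in> X \<and> y \<in> X \<and> x \<noteq> y}"

definition Lip :: "('a \<Rightarrow> 'a \<Rightarrow> real) \<Rightarrow> 'a set \<Rightarrow> ('b \<Rightarrow> 'b \<Rightarrow> real) \<Rightarrow> ('a \<Rightarrow> 'b) \<Rightarrow> real" where
  "Lip d X d' f = Sup (lip_set d X d' f)"

definition Lip_inv :: "('a \<Rightarrow> 'a \<Rightarrow> real) \<Rightarrow> 'a set \<Rightarrow> ('b \<Rightarrow> 'b \<Rightarrow> real) \<Rightarrow> ('a \<Rightarrow> 'b) \<Rightarrow> real" where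
  "Lip_inv d X d' f = Sup (lipinv_set d X d' f)"

definition bilipschitz :: "('a \<Rightarrow> 'a \<Rightarrow> real) \<Rightarrow> 'a set \<Rightarrow> ('b \<Rightarrow> 'b \<Rightarrow> real) \<Rightarrow> ('a \<Rightarrow> 'b) \<Rightarrow> bool" where
  "bilipschitz d X d' f \<longleftrightarrow> inj_on f X \<and> bdd_above (lip_set d X d' f) \<and> bdd_above (lipinv_set d X d' f)"

definition distortion :: "('a \<Rightarrow> 'a \<Rightarrow> real) \<Rightarrow> 'a set \<Rightarrow> ('b \<Rightarrow> 'b \<Rightarrow> real) \<Rightarrow> ('a \<Rightarrow> 'b) \<Rightarrow> real" where
  "distortion d X d' f = Lip d X d' f * Lip_inv d X d' f"

end

theory Submission
  imports Defs "HOL-Library.Nat_Bijection"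
begin

text \<open>Let W_n be the union of the diamonds D_0, ..., D_n built on nested vertex sets: every
  edge of D_m is kept when D_(m+1) replaces it by a quadrilateral. Adding the two new vertices
  of each quadrilateral one at a time is a series-parallel step, so W_n is series-parallel, and
  it contains D_n.

  A vertex created at level m+1 on an edge of D_m gets an endpoint of that edge as parent,
  which has level at most m. This makes the vertices a tree graded by level; write
  s(x, y) for the first level at which the ancestors of x and y differ, and give the edge
  {a, b} the weight 2^-s(a,b). Then the shortest path metric is comparable to the ultrametric
  2^-s(x,y): a walk from x to y must cross an edge whose endpoints have different ancestors at
  level s(x, y), and climbing from x and from y to their common ancestor at level s(x,y) - 1
  (to the two adjacent poles if s(x,y) = 0) costs two geometric series. Mapping x to the vector with entry 2^-k at the coordinate
  (k, ancestor of x at level k) embeds this ultrametric into ell2 with distance between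
  2^-s and 2 * 2^-s. The distortion is therefore at most 2 * 4, independently of n.\<close>

section \<open>Walks and shortest path distances\<close>

lemma walk_singleton [simp]: "walk E a a [a]" "walk_len w [a] = 0"
  unfolding walk_def walk_len_def by auto

lemma walk_Cons:
  assumes "ys \<noteq> []"
  shows "walk E a c (a # ys) \<longleftrightarrow> {a, hd ys} \<in> E \<and> walk E (hd ys) c ys"
proof -
  have "(\<forall>i < length (a # ys) - 1. {(a # ys) ! i, (a # ys) ! Suc i} \<in> E) \<longleftrightarrow>
        {a, ys ! 0} \<in> E \<and> (\<forall>i < length ys - 1. {ys ! i, ys ! Suc i} \<in> E)"
    using assms by (cases ys) (auto simp: less_Suc_eq_0_disj)
  then show ?thesis
    using assms unfolding walk_def by (auto simp: hd_conv_nth)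
qed

lemma walk_len_Cons:
  assumes "ys \<noteq> []"
  shows "walk_len w (a # ys) = w {a, hd ys} + walk_len w ys"
  using assms unfolding walk_len_def
  by (cases ys) (simp_all add: sum.lessThan_Suc_shift del: sum.lessThan_Suc)

lemma walk_edge: "{a, b} \<in> E \<Longrightarrow> walk E a b [a, b]"
  using walk_Cons[of "[b]" E a b] by simp

lemma walk_len_pair [simp]: "walk_len w [a, b] = w {a, b}"
  using walk_len_Cons[of "[b]" w a] by simp

lemma walk_append:
  assumes "walk E a b xs" "walk E b c ys"
  shows "walk E a c (xs @ tl ys) \<and> walk_len w (xs @ tl ys) = walk_len w xs + walk_len w ys"
  using assms
proof (induction xs arbitrary: a)
  case Nil
  then show ?case by (simp add: walk_def)
next
  case (Cons x xs)
  have "x = a"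
    using Cons.prems by (simp add: walk_def)
  show ?case
  proof (cases "xs = []")
    case True
    with Cons.prems \<open>x = a\<close> have "b = a" "ys = a # tl ys"
      by (cases ys; auto simp: walk_def)+
    with True \<open>x = a\<close> show ?thesis
      using Cons.prems(2) by simp
  next
    case False
    with Cons.prems(1) \<open>x = a\<close> have "{a, hd xs} \<in> E" "walk E (hd xs) b xs"
      by (auto simp: walk_Cons)
    with Cons.IH[OF _ Cons.prems(2)] False \<open>x = a\<close> show ?thesis
      by (auto simp: walk_Cons walk_len_Cons)
  qed
qed

lemma walk_rev:
  assumes "walk E a b xs"
  shows "walk E b a (rev xs) \<and> walk_len w (rev xs) = walk_len w xs"
  using assms
proof (induction xs arbitrary: a)
  case Nil
  then show ?case by (simp add: walk_def)
next
  case (Cons x xs)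
  have "x = a"
    using Cons.prems by (simp add: walk_def)
  show ?case
  proof (cases "xs = []")
    case True
    with Cons.prems \<open>x = a\<close> show ?thesis by (simp add: walk_def)
  next
    case False
    with Cons.prems \<open>x = a\<close> have "{hd xs, a} \<in> E" and xs: "walk E (hd xs) b xs"
      by (auto simp: walk_Cons insert_commute)
    then have "walk E (hd xs) a [hd xs, a]"
      using walk_edge[of "hd xs" a E] by (simp add: insert_commute)
    with Cons.IH[OF xs] walk_append[of E b "hd xs" "rev xs" a "[hd xs, a]" w]
    show ?thesis
      using False \<open>x = a\<close> by (simp add: walk_len_Cons insert_commute)
  qed
qed

lemma walk_join:
  assumes "walk E x c xs" "walk E y c ys"
  shows "walk E x y (xs @ tl (rev ys)) \<and>
    walk_len w (xs @ tl (rev ys)) = walk_len w xs + walk_len w ys"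
  using walk_append[OF assms(1) walk_rev[OF assms(2), THEN conjunct1]] walk_rev[OF assms(2)] by simp

lemma walk_len_nonneg:
  assumes "\<forall>e\<in>E. 0 \<le> w e" "walk E u v xs"
  shows "0 \<le> walk_len w xs"
  using assms unfolding walk_def walk_len_def by (auto intro: sum_nonneg)

lemma spdist_le_walk_len:
  assumes "\<forall>e\<in>E. 0 \<le> w e" "walk E u v xs"
  shows "spdist E w u v \<le> walk_len w xs"
  unfolding spdist_def
  using assms walk_len_nonneg[OF assms(1)] by (intro cInf_lower bdd_belowI[of _ 0]) auto

lemma walk_crosses:
  assumes "walk E x y xs" "g x \<noteq> g y"
  obtains i where "i < length xs - 1" "g (xs ! i) \<noteq> g (xs ! Suc i)"
proof (rule ccontr)
  assume "\<not> thesis"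
  with that have step: "g (xs ! i) = g (xs ! Suc i)" if "i < length xs - 1" for i
    using that by blast
  have "g (xs ! i) = g (xs ! 0)" if "i < length xs" for i
    using that by (induction i) (auto simp: step)
  moreover have "xs ! 0 = x" "xs ! (length xs - 1) = y" "xs \<noteq> []"
    using assms(1) by (auto simp: walk_def hd_conv_nth last_conv_nth)
  ultimately show False
    using assms(2) by (metis diff_less length_greater_0_conv zero_less_one)
qed

lemma spdist_ge_cut:
  assumes "\<forall>e\<in>E. 0 \<le> w e" "walk E x y xs0" "g x \<noteq> g y"
    and cut: "\<And>a b. {a, b} \<in> E \<Longrightarrow> g a \<noteq> g b \<Longrightarrow> c \<le> w {a, b}"
  shows "c \<le> spdist E w x y"
  unfolding spdist_def
proof (rule cInf_greatest)
  show "{walk_len w xs |xs. walk E x y xs} \<noteq> {}"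
    using assms(2) by blast
next
  fix r assume "r \<in> {walk_len w xs |xs. walk E x y xs}"
  then obtain xs where xs: "walk E x y xs" "r = walk_len w xs" by blast
  obtain i where i: "i < length xs - 1" "g (xs ! i) \<noteq> g (xs ! Suc i)"
    using walk_crosses[OF xs(1) assms(3)] by blast
  have edges: "{xs ! k, xs ! Suc k} \<in> E" if "k < length xs - 1" for k
    using xs(1) that by (simp add: walk_def)
  have "c \<le> w {xs ! i, xs ! Suc i}"
    using cut[OF edges[OF i(1)] i(2)] .
  also have "\<dots> \<le> walk_len w xs"
    unfolding walk_len_def using i(1) edges assms(1)
    by (intro member_le_sum[where f = "\<lambda>k. w {xs ! k, xs ! Suc k}"]) auto
  finally show "c \<le> r" using xs(2) by simp
qed

lemma bilipschitz_distortion_le: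
  fixes d :: "'a \<Rightarrow> 'a \<Rightarrow> real" and d' :: "'b \<Rightarrow> 'b \<Rightarrow> real"
  assumes "x0 \<in> X" "y0 \<in> X" "x0 \<noteq> y0"
    and d'_refl: "\<And>z. d' z z = 0"
    and pos: "\<And>x y. x \<in> X \<Longrightarrow> y \<in> X \<Longrightarrow> x \<noteq> y \<Longrightarrow> 0 < d x y \<and> 0 < d' (f x) (f y)"
    and lip: "\<And>x y. x \<in> X \<Longrightarrow> y \<in> X \<Longrightarrow> x \<noteq> y \<Longrightarrow> d' (f x) (f y) \<le> L * d x y"
    and colip: "\<And>x y. x \<in> X \<Longrightarrow> y \<in> X \<Longrightarrow> x \<noteq> y \<Longrightarrow> d x y \<le> M * d' (f x) (f y)"
  shows "bilipschitz d X d' f \<and> distortion d X d' f \<le> L * M"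
proof -
  have "0 \<le> d' (f x) (f y) / d x y \<and> d' (f x) (f y) / d x y \<le> L"
    "0 \<le> d x y / d' (f x) (f y) \<and> d x y / d' (f x) (f y) \<le> M"
    if "x \<in> X" "y \<in> X" "x \<noteq> y" for x y
    using pos[OF that] lip[OF that] colip[OF that] by (simp_all add: pos_divide_le_eq mult.commute)
  then have lip_set: "lip_set d X d' f \<noteq> {}" "\<forall>r \<in> lip_set d X d' f. 0 \<le> r \<and> r \<le> L"
    and lipinv_set: "lipinv_set d X d' f \<noteq> {}" "\<forall>r \<in> lipinv_set d X d' f. 0 \<le> r \<and> r \<le> M"
    using assms(1-3) unfolding lip_set_def lipinv_set_def by blast+
  have bdd: "bdd_above (lip_set d X d' f)" "bdd_above (lipinv_set d X d' f)"
    using lip_set(2) lipinv_set(2) by (auto intro: bdd_aboveI)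
  have "inj_on f X"
    using pos d'_refl by (metis inj_onI less_irrefl)
  moreover have "0 \<le> Lip d X d' f" "Lip d X d' f \<le> L"
    unfolding Lip_def using lip_set bdd(1) by (auto intro: cSup_least cSup_upper2)
  moreover have "0 \<le> Lip_inv d X d' f" "Lip_inv d X d' f \<le> M"
    unfolding Lip_inv_def using lipinv_set bdd(2) by (auto intro: cSup_least cSup_upper2)
  ultimately show ?thesis
    unfolding bilipschitz_def distortion_def using bdd by (auto intro: mult_mono)
qed

section \<open>Embedding a level hierarchy into ell2\<close>

definition level_embedding :: "nat \<Rightarrow> (nat \<Rightarrow> 'a \<Rightarrow> nat) \<Rightarrow> 'a \<Rightarrow> nat \<Rightarrow> real" where
  "level_embedding n \<pi> x =
     (\<lambda>(k, v). if k \<le> n \<and> v = \<pi> k x then (1/2) ^ k else 0) \<circ> prod_decode"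

lemma level_embedding_encode [simp]:
  "level_embedding n \<pi> x (prod_encode (k, v)) = (if k \<le> n \<and> v = \<pi> k x then (1/2) ^ k else 0)"
  by (simp add: level_embedding_def)

lemma level_embedding_eq_0:
  assumes "i \<notin> (\<lambda>k. prod_encode (k, \<pi> k x)) ` {..n}"
  shows "level_embedding n \<pi> x i = 0"
proof -
  obtain k v where "i = prod_encode (k, v)"
    by (metis prod_decode_inverse surj_pair)
  with assms show ?thesis by auto
qed

lemma level_embedding_in_ell2: "level_embedding n \<pi> x \<in> ell2"
  unfolding ell2_def mem_Collect_eq
  by (rule summable_finite[of "(\<lambda>k. prod_encode (k, \<pi> k x)) ` {..n}"])
    (auto simp: level_embedding_eq_0)

lemma sum_sq_diff_level_embedding:
  "(\<Sum>i. (level_embedding n \<pi> x i - level_embedding n \<pi> y i)\<^sup>2) =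
   (\<Sum>k\<le>n. if \<pi> k x = \<pi> k y then 0 else 2 * (1/4) ^ k)"
proof -
  define g where "g i = (level_embedding n \<pi> x i - level_embedding n \<pi> y i)\<^sup>2" for i
  define A where "A k = {prod_encode (k, \<pi> k x), prod_encode (k, \<pi> k y)}" for k
  have "g i = 0" if "i \<notin> (\<Union>k\<le>n. A k)" for i
    using that level_embedding_eq_0[of i \<pi> x n] level_embedding_eq_0[of i \<pi> y n]
    unfolding g_def A_def by fastforce
  then have "(\<Sum>i. g i) = sum g (\<Union>k\<le>n. A k)"
    by (intro suminf_finite) (auto simp: A_def)
  also have "\<dots> = (\<Sum>k\<le>n. sum g (A k))"
    by (rule sum.UNION_disjoint) (auto simp: A_def)
  also have "\<dots> = (\<Sum>k\<le>n. if \<pi> k x = \<pi> k y then 0 else 2 * (1/4) ^ k)"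
  proof (rule sum.cong)
    fix k assume "k \<in> {..n}"
    then show "sum g (A k) = (if \<pi> k x = \<pi> k y then 0 else 2 * (1/4) ^ k)"
      unfolding A_def g_def by (auto simp: power2_eq_square power_mult_distrib[symmetric])
  qed simp
  finally show ?thesis unfolding g_def .
qed

lemma ell2_dist_level_embedding:
  assumes "j \<le> n" "\<pi> j x \<noteq> \<pi> j y" "\<And>k. k < j \<Longrightarrow> \<pi> k x = \<pi> k y"
  shows "(1/2) ^ j \<le> ell2_dist (level_embedding n \<pi> x) (level_embedding n \<pi> y)"
    and "ell2_dist (level_embedding n \<pi> x) (level_embedding n \<pi> y) \<le> 2 * (1/2) ^ j"
proof -
  define c where "c k = (if \<pi> k x = \<pi> k y then 0 else 2 * (1/4::real) ^ k)" for k
  have dist: "ell2_dist (level_embedding n \<pi> x) (level_embedding n \<pi> y) = sqrt (\<Sum>k\<le>n. c k)"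
    unfolding ell2_dist_def c_def sum_sq_diff_level_embedding ..
  have "((1/2) ^ j)\<^sup>2 \<le> c j"
    using assms(2) by (simp add: c_def power2_eq_square power_mult_distrib[symmetric])
  also have "\<dots> \<le> (\<Sum>k\<le>n. c k)"
    using assms(1) by (intro member_le_sum) (auto simp: c_def)
  finally show "(1/2) ^ j \<le> ell2_dist (level_embedding n \<pi> x) (level_embedding n \<pi> y)"
    unfolding dist by (rule real_le_rsqrt)
  have "(\<Sum>k\<le>n. c k) = (\<Sum>k=j..n. c k)"
    using assms(1,3) by (intro sum.mono_neutral_right) (auto simp: c_def)
  also have "\<dots> \<le> (\<Sum>k=j..n. 2 * (1/4) ^ k)"
    by (intro sum_mono) (simp add: c_def)
  also have "\<dots> = 8/3 * ((1/4) ^ j - (1/4) ^ Suc n)"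
    using assms(1) by (simp add: sum_distrib_left[symmetric] sum_gp)
  also have "\<dots> \<le> 4 * (1/4) ^ j"
  proof -
    have "0 \<le> (1/4::real) ^ j" "0 \<le> (1/4::real) ^ Suc n"
      by simp_all
    then show ?thesis by argo
  qed
  also have "\<dots> = (2 * (1/2) ^ j)\<^sup>2"
    by (simp add: power2_eq_square power_mult_distrib[symmetric])
  finally have "sqrt (\<Sum>k\<le>n. c k) \<le> sqrt ((2 * (1/2) ^ j)\<^sup>2)"
    by (rule real_sqrt_le_mono)
  also have "sqrt ((2 * (1/2) ^ j)\<^sup>2) = 2 * (1/2::real) ^ j"
    by (rule real_sqrt_unique) simp_all
  finally show "ell2_dist (level_embedding n \<pi> x) (level_embedding n \<pi> y) \<le> 2 * (1/2) ^ j"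
    unfolding dist .
qed

lemma sp_full_edge: "sp_full V E \<Longrightarrow> e \<in> E \<Longrightarrow> \<exists>a b. e = {a, b}"
  by (induction rule: sp_full.induct) auto

lemma sp_full_attach_apices:
  assumes "sp_full V E" "finite F" "F \<subseteq> E"
    and "inj_on p F" "inj_on q F" "p ` F \<inter> V = {}" "q ` F \<inter> V = {}" "p ` F \<inter> q ` F = {}"
  shows "sp_full (V \<union> p ` F \<union> q ` F) (E \<union> (\<Union>e\<in>F. {{x, p e} | x. x \<in> e} \<union> {{x, q e} | x. x \<in> e}))"
  using assms(2-)
proof (induction F rule: finite_induct)
  case empty
  then show ?case using assms(1) by simp
next
  case (insert e F)
  define V' where "V' = V \<union> p ` F \<union> q ` F"
  define E' where "E' = E \<union> (\<Union>e\<in>F. {{x, p e} | x. x \<in> e} \<union> {{x, q e} | x. x \<in> e})"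
  have IH: "sp_full V' E'"
    using insert unfolding V'_def E'_def by (intro insert.IH) (auto simp: inj_on_insert)
  obtain a b where e: "e = {a, b}"
    using sp_full_edge[OF assms(1)] insert.prems(1) by blast
  have "{a, b} \<in> E'"
    using insert.prems(1) e unfolding E'_def by blast
  moreover have "p e \<notin> V'" "q e \<notin> insert (p e) V'"
    using insert.hyps(2) insert.prems(2-6) unfolding V'_def by (auto simp: inj_on_insert)
  ultimately have "sp_full (insert (q e) (insert (p e) V'))
      (E' \<union> {{p e, a}, {p e, b}} \<union> {{q e, a}, {q e, b}})"
    using IH by (intro sp_full.step) auto
  moreover have "insert (q e) (insert (p e) V') = V \<union> p ` insert e F \<union> q ` insert e F"
    unfolding V'_def by auto
  moreover have "E' \<union> {{p e, a}, {p e, b}} \<union> {{q e, a}, {q e, b}} =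
      E \<union> (\<Union>e\<in>insert e F. {{x, p e} | x. x \<in> e} \<union> {{x, q e} | x. x \<in> e})"
    unfolding E'_def e by (auto simp: insert_commute)
  ultimately show ?case by simp
qed

section \<open>The layered diamond graphs\<close>

text \<open>The two poles of D_0 are the codes of (0, b); the vertex
  that D_(m+1) places on the edge e of D_m is the code of (m+1, ((min e, max e), b)), so its
  level is m+1 and its parent is the endpoint min e of e, whose level is at most m.\<close>

definition pole :: "bool \<Rightarrow> nat" where
  "pole b = prod_encode (0, of_bool b)"

definition apex :: "nat \<Rightarrow> bool \<Rightarrow> nat set \<Rightarrow> nat" where
  "apex m b e = prod_encode (Suc m, prod_encode (prod_encode (Min e, Max e), of_bool b))"

definition level :: "nat \<Rightarrow> nat" where
  "level v = fst (prod_decode v)"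

definition parent :: "nat \<Rightarrow> nat" where
  "parent v = fst (prod_decode (fst (prod_decode (snd (prod_decode v)))))"

lemma level_pole [simp]: "level (pole b) = 0"
  and level_apex [simp]: "level (apex m b e) = Suc m"
  and parent_apex [simp]: "parent (apex m b e) = Min e"
  by (simp_all add: pole_def apex_def level_def parent_def)

lemma pole_eq_iff [simp]: "pole b = pole b' \<longleftrightarrow> b = b'"
  by (simp add: pole_def)

lemma apex_eq_iff:
  assumes "e = {a, b}" "e' = {c, d}"
  shows "apex m \<beta> e = apex m' \<beta>' e' \<longleftrightarrow> m = m' \<and> \<beta> = \<beta>' \<and> e = e'"
proof -
  have "e = {Min e, Max e}" "e' = {Min e', Max e'}"
    using assms by (auto simp: min_def max_def)
  then show ?thesis
    by (auto simp: apex_def)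
qed

primrec diamond_edges :: "nat \<Rightarrow> nat set set" where
  "diamond_edges 0 = {{pole False, pole True}}"
| "diamond_edges (Suc m) = (\<Union>e\<in>diamond_edges m.
     {{x, apex m False e} | x. x \<in> e} \<union> {{x, apex m True e} | x. x \<in> e})"

primrec diamond_vertices :: "nat \<Rightarrow> nat set" where
  "diamond_vertices 0 = {pole False, pole True}"
| "diamond_vertices (Suc m) =
     diamond_vertices m \<union> apex m False ` diamond_edges m \<union> apex m True ` diamond_edges m"

definition layered_edges :: "nat \<Rightarrow> nat set set" where
  "layered_edges n = (\<Union>m\<le>n. diamond_edges m)"

lemma layered_edges_Suc: "layered_edges (Suc m) = layered_edges m \<union> diamond_edges (Suc m)"
  by (auto simp: layered_edges_def atMost_Suc)

lemma level_le: "v \<in> diamond_vertices n \<Longrightarrow> level v \<le> n"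
  by (induction n) (auto intro: le_SucI)

lemma diamond_edge_shape:
  "e \<in> diamond_edges n \<Longrightarrow> \<exists>a b. e = {a, b} \<and> a \<noteq> b \<and> a \<in> diamond_vertices n \<and> b \<in> diamond_vertices n"
proof (induction n arbitrary: e)
  case 0
  then show ?case by (intro exI[of _ "pole False"] exI[of _ "pole True"]) auto
next
  case (Suc m)
  then obtain e0 x \<beta> where e0: "e0 \<in> diamond_edges m" "x \<in> e0" and e: "e = {x, apex m \<beta> e0}"
    by auto
  with Suc.IH have "x \<in> diamond_vertices m"
    by blast
  moreover from this have "x \<noteq> apex m \<beta> e0"
    using level_le[of x m] by auto
  ultimately show ?case
    using e e0(1) by (cases \<beta>) auto
qed

lemma finite_diamond_edges: "finite (diamond_edges n)"
proof (induction n)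
  case (Suc m)
  have "finite {{x, apex m \<beta> e} | x. x \<in> e}" if "e \<in> diamond_edges m" for e \<beta>
    using diamond_edge_shape[OF that] by (auto simp: setcompr_eq_image)
  with Suc show ?case by auto
qed simp

lemma finite_diamond_vertices: "finite (diamond_vertices n)"
  by (induction n) (simp_all add: finite_diamond_edges)

lemma diamond_vertices_mono: "m \<le> n \<Longrightarrow> diamond_vertices m \<subseteq> diamond_vertices n"
  by (induction n rule: dec_induct) auto

lemma layered_edge_shape:
  "e \<in> layered_edges n \<Longrightarrow> \<exists>a b. e = {a, b} \<and> a \<noteq> b \<and> a \<in> diamond_vertices n \<and> b \<in> diamond_vertices n"
proof -
  assume "e \<in> layered_edges n"
  then obtain m where "m \<le> n" "e \<in> diamond_edges m"
    unfolding layered_edges_def by blast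
  with diamond_edge_shape[of e m] diamond_vertices_mono[of m n] show ?thesis
    by blast
qed

lemma pole_mem: "pole \<beta> \<in> diamond_vertices n"
  using diamond_vertices_mono[of 0 n] by (cases \<beta>) auto

lemma pole_edge: "\<alpha> \<noteq> \<beta> \<Longrightarrow> {pole \<alpha>, pole \<beta>} \<in> layered_edges n"
  unfolding layered_edges_def by (cases \<alpha>; cases \<beta>) (force simp: insert_commute)+

lemma level_eq_0_pole: "v \<in> diamond_vertices n \<Longrightarrow> level v = 0 \<Longrightarrow> v \<in> range pole"
  by (induction n) auto

lemma parent_mem:
  assumes "v \<in> diamond_vertices n" "1 \<le> level v"
  shows "parent v \<in> diamond_vertices n \<and> level (parent v) < level v \<and> {v, parent v} \<in> layered_edges n"
  using assms
proof (induction n)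
  case 0
  then show ?case by auto
next
  case (Suc m)
  have mono: "diamond_vertices m \<subseteq> diamond_vertices (Suc m)" "layered_edges m \<subseteq> layered_edges (Suc m)"
    by (auto simp: layered_edges_Suc)
  show ?case
  proof (cases "v \<in> diamond_vertices m")
    case True
    with Suc mono show ?thesis by blast
  next
    case False
    with Suc.prems obtain e \<beta> where e: "e \<in> diamond_edges m" and v: "v = apex m \<beta> e"
      by auto
    obtain a b where "e = {a, b}" "a \<in> diamond_vertices m" "b \<in> diamond_vertices m"
      using diamond_edge_shape[OF e] by blast
    then have "Min e \<in> e" "Min e \<in> diamond_vertices m"
      by (auto simp: min_def)
    moreover have "{v, Min e} \<in> layered_edges (Suc m)"
      using e v \<open>Min e \<in> e\<close> by (cases \<beta>) (auto simp: layered_edges_Suc insert_commute)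
    ultimately show ?thesis
      using v mono level_le[of "Min e" m] by auto
  qed
qed

lemma inj_on_apex: "inj_on (apex m \<beta>) (diamond_edges m)"
  by (rule inj_onI) (metis diamond_edge_shape apex_eq_iff)

lemma apex_notin_diamond_vertices: "apex m \<beta> ` diamond_edges m \<inter> diamond_vertices m = {}"
  using level_le[of _ m] by fastforce

lemma apex_inj_disjoint:
  "inj_on (apex m False) (diamond_edges m)" "inj_on (apex m True) (diamond_edges m)"
  "apex m False ` diamond_edges m \<inter> diamond_vertices m = {}"
  "apex m True ` diamond_edges m \<inter> diamond_vertices m = {}"
  "apex m False ` diamond_edges m \<inter> apex m True ` diamond_edges m = {}"
  by (auto simp: inj_on_apex apex_notin_diamond_vertices) (simp add: apex_def)

lemma is_diamond_diamond: "is_diamond n (diamond_vertices n) (diamond_edges n)"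
proof (induction n)
  case 0
  then show ?case using is_diamond.zero[of "pole False" "pole True"] by simp
next
  case (Suc m)
  then show ?case
    using is_diamond.suc[OF Suc apex_inj_disjoint] by simp
qed

lemma sp_full_layered: "sp_full (diamond_vertices n) (layered_edges n)"
proof (induction n)
  case 0
  then show ?case using sp_full.base[of "pole False" "pole True"] by (simp add: layered_edges_def)
next
  case (Suc m)
  have "diamond_edges m \<subseteq> layered_edges m"
    by (auto simp: layered_edges_def)
  then show ?case
    using sp_full_attach_apices[OF Suc finite_diamond_edges _ apex_inj_disjoint]
    by (simp add: layered_edges_Suc)
qed

section \<open>Ancestors and edge weights\<close>

text \<open>The disjunct comparing levels only makes the recursion terminate: on diamond vertices of
  positive level the parent always has smaller level (see ancestor_eq).\<close>

function ancestor :: "nat \<Rightarrow> nat \<Rightarrow> nat" where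
  "ancestor k v = (if level v \<le> k \<or> level v \<le> level (parent v) then v else ancestor k (parent v))"
  by auto
termination
  by (relation "measure (\<lambda>(k, v). level v)") auto

declare ancestor.simps [simp del]

lemma ancestor_eq:
  assumes "v \<in> diamond_vertices n"
  shows "ancestor k v = (if level v \<le> k then v else ancestor k (parent v))"
proof (cases "level v \<le> k")
  case False
  then have "level (parent v) < level v"
    using parent_mem[OF assms] by simp
  with False show ?thesis by (subst ancestor.simps) simp
qed (subst ancestor.simps, simp)

lemma ancestor_mem:
  "v \<in> diamond_vertices n \<Longrightarrow> ancestor k v \<in> diamond_vertices n \<and> level (ancestor k v) \<le> k"
proof (induction v rule: measure_induct_rule[of level])
  case (less v)
  show ?case
  proof (cases "level v \<le> k")
    case True
    with less.prems show ?thesis by (simp add: ancestor_eq)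
  next
    case False
    with parent_mem[OF less.prems] less.IH show ?thesis
      by (simp add: ancestor_eq[OF less.prems])
  qed
qed

definition split_level :: "nat \<Rightarrow> nat \<Rightarrow> nat" where
  "split_level x y = (LEAST k. ancestor k x \<noteq> ancestor k y)"

definition edge_weight :: "nat set \<Rightarrow> real" where
  "edge_weight e = (1/2) ^ (LEAST k. \<exists>a\<in>e. \<exists>b\<in>e. ancestor k a \<noteq> ancestor k b)"

lemma edge_weight_pair: "edge_weight {a, b} = (1/2) ^ split_level a b"
proof -
  have "(\<exists>a'\<in>{a, b}. \<exists>b'\<in>{a, b}. ancestor k a' \<noteq> ancestor k b') \<longleftrightarrow> ancestor k a \<noteq> ancestor k b" for k
    by auto
  then show ?thesis
    unfolding edge_weight_def split_level_def by simp
qed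

lemma edge_weight_ge: "ancestor j a \<noteq> ancestor j b \<Longrightarrow> (1/2) ^ j \<le> edge_weight {a, b}"
  unfolding edge_weight_pair split_level_def by (rule power_decreasing) (auto intro: Least_le)

lemma split_level_spec:
  assumes "x \<in> diamond_vertices n" "y \<in> diamond_vertices n" "x \<noteq> y"
  shows "ancestor (split_level x y) x \<noteq> ancestor (split_level x y) y"
    and "split_level x y \<le> n"
    and "\<And>k. k < split_level x y \<Longrightarrow> ancestor k x = ancestor k y"
proof -
  have "ancestor n x \<noteq> ancestor n y"
    using assms level_le by (simp add: ancestor_eq)
  then show "ancestor (split_level x y) x \<noteq> ancestor (split_level x y) y" "split_level x y \<le> n"
    unfolding split_level_def by (rule LeastI, rule Least_le)
  show "\<And>k. k < split_level x y \<Longrightarrow> ancestor k x = ancestor k y"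
    unfolding split_level_def using not_less_Least by blast
qed

lemma edge_weight_parent:
  assumes "v \<in> diamond_vertices n" "1 \<le> level v"
  shows "edge_weight {v, parent v} = (1/2) ^ level v"
proof -
  have p: "parent v \<in> diamond_vertices n" "level (parent v) < level v"
    using parent_mem[OF assms] by auto
  have "split_level v (parent v) = level v"
    unfolding split_level_def
  proof (rule Least_equality)
    show "ancestor (level v) v \<noteq> ancestor (level v) (parent v)"
      using p assms(1) by (auto simp: ancestor_eq)
  next
    fix k assume "ancestor k v \<noteq> ancestor k (parent v)"
    then show "level v \<le> k"
      using assms(1) by (auto simp: ancestor_eq[of v] split: if_splits)
  qed
  then show ?thesis by (simp add: edge_weight_pair)
qed

text \<open>The climb uses one edge of weight (1/2)^l for each level l above k.\<close>

lemma walk_to_ancestor: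
  assumes "v \<in> diamond_vertices n"
  shows "\<exists>xs. walk (layered_edges n) v (ancestor k v) xs \<and>
    walk_len edge_weight xs \<le> (1/2) ^ k - (1/2) ^ max k (level v)"
  using assms
proof (induction v rule: measure_induct_rule[of level])
  case (less v)
  show ?case
  proof (cases "level v \<le> k")
    case True
    then show ?thesis
      using less.prems by (intro exI[of _ "[v]"]) (simp add: ancestor_eq max_def)
  next
    case False
    then have p: "parent v \<in> diamond_vertices n" "level (parent v) < level v"
      "{v, parent v} \<in> layered_edges n"
      using parent_mem[OF less.prems] by auto
    obtain ys where ys: "walk (layered_edges n) (parent v) (ancestor k v) ys"
      "walk_len edge_weight ys \<le> (1/2) ^ k - (1/2) ^ max k (level (parent v))"
      using less.IH[OF p(2,1)] False by (auto simp: ancestor_eq[OF less.prems])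
    have walk: "walk (layered_edges n) v (ancestor k v) ([v, parent v] @ tl ys)"
      and len: "walk_len edge_weight ([v, parent v] @ tl ys) = (1/2) ^ level v + walk_len edge_weight ys"
      using walk_append[OF walk_edge[OF p(3)] ys(1)] edge_weight_parent[OF less.prems] False
      by auto
    have "2 * (1/2::real) ^ level v = (1/2) ^ (level v - 1)"
      using False by (cases "level v") simp_all
    also have "\<dots> \<le> (1/2) ^ max k (level (parent v))"
      using False p(2) by (intro power_decreasing) auto
    finally have "walk_len edge_weight ([v, parent v] @ tl ys) \<le> (1/2) ^ k - (1/2) ^ level v"
      using len ys(2) by linarith
    with walk False show ?thesis
      by (auto simp: max_def)
  qed
qed

section \<open>Distance estimates\<close>

lemma exists_short_walk:
  assumes "x \<in> diamond_vertices n" "y \<in> diamond_vertices n" "x \<noteq> y"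
  shows "\<exists>xs. walk (layered_edges n) x y xs \<and>
    walk_len edge_weight xs \<le> 4 * (1/2) ^ split_level x y"
proof -
  have climb: "\<exists>xs. walk (layered_edges n) v (ancestor k v) xs \<and> walk_len edge_weight xs \<le> (1/2) ^ k"
    if v: "v \<in> diamond_vertices n" for v k
  proof -
    obtain xs where "walk (layered_edges n) v (ancestor k v) xs"
      "walk_len edge_weight xs \<le> (1/2) ^ k - (1/2) ^ max k (level v)"
      using walk_to_ancestor[OF v] by blast
    moreover have "(1/2::real) ^ k - (1/2) ^ max k (level v) \<le> (1/2) ^ k"
      by simp
    ultimately show ?thesis
      by (meson order_trans)
  qed
  show ?thesis
  proof (cases "split_level x y")
    case 0
    define a b where "a = ancestor 0 x" and "b = ancestor 0 y"
    have "a \<noteq> b"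
      using split_level_spec(1)[OF assms] 0 by (simp add: a_def b_def)
    moreover obtain \<alpha> \<beta> where "a = pole \<alpha>" "b = pole \<beta>"
      using ancestor_mem[OF assms(1), of 0] ancestor_mem[OF assms(2), of 0] level_eq_0_pole
      unfolding a_def b_def by blast
    ultimately have "{b, a} \<in> layered_edges n"
      using pole_edge[of \<beta> \<alpha>] by blast
    then have ba: "walk (layered_edges n) b a [b, a]" "walk_len edge_weight [b, a] \<le> 1"
      by (auto simp: walk_edge edge_weight_pair power_le_one)
    obtain xs ys where xs: "walk (layered_edges n) x a xs" "walk_len edge_weight xs \<le> 1"
      and ys: "walk (layered_edges n) y b ys" "walk_len edge_weight ys \<le> 1"
      using climb[OF assms(1), of 0] climb[OF assms(2), of 0] unfolding a_def b_def by auto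
    have "walk (layered_edges n) y a (ys @ tl [b, a])" "walk_len edge_weight (ys @ tl [b, a]) \<le> 2"
      using walk_append[OF ys(1) ba(1), of edge_weight] ys(2) ba(2) by auto
    with walk_join[OF xs(1), of y "ys @ tl [b, a]" edge_weight] xs(2) 0 show ?thesis
      by fastforce
  next
    case (Suc i)
    then have "ancestor i x = ancestor i y"
      using split_level_spec(3)[OF assms] by simp
    then obtain xs ys where xs: "walk (layered_edges n) x (ancestor i x) xs"
        "walk_len edge_weight xs \<le> (1/2) ^ i"
      and ys: "walk (layered_edges n) y (ancestor i x) ys" "walk_len edge_weight ys \<le> (1/2) ^ i"
      using climb[OF assms(1), of i] climb[OF assms(2), of i] by auto
    with walk_join[OF xs(1) ys(1), of edge_weight] Suc show ?thesis
      by fastforce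
  qed
qed

lemma spdist_split_level_bounds:
  assumes "x \<in> diamond_vertices n" "y \<in> diamond_vertices n" "x \<noteq> y"
  shows "(1/2) ^ split_level x y \<le> spdist (layered_edges n) edge_weight x y"
    and "spdist (layered_edges n) edge_weight x y \<le> 4 * (1/2) ^ split_level x y"
proof -
  have nonneg: "\<forall>e\<in>layered_edges n. 0 \<le> edge_weight e"
    by (simp add: edge_weight_def)
  obtain xs where xs: "walk (layered_edges n) x y xs"
    "walk_len edge_weight xs \<le> 4 * (1/2) ^ split_level x y"
    using exists_short_walk[OF assms] by blast
  show "spdist (layered_edges n) edge_weight x y \<le> 4 * (1/2) ^ split_level x y"
    using spdist_le_walk_len[OF nonneg xs(1)] xs(2) by simp
  show "(1/2) ^ split_level x y \<le> spdist (layered_edges n) edge_weight x y"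
    using nonneg xs(1) split_level_spec(1)[OF assms] edge_weight_ge
    by (rule spdist_ge_cut)
qed

lemma ell2_dist_split_level_bounds:
  assumes "x \<in> diamond_vertices n" "y \<in> diamond_vertices n" "x \<noteq> y"
  shows "(1/2) ^ split_level x y \<le> ell2_dist (level_embedding n ancestor x) (level_embedding n ancestor y)"
    and "ell2_dist (level_embedding n ancestor x) (level_embedding n ancestor y) \<le> 2 * (1/2) ^ split_level x y"
  using ell2_dist_level_embedding[of "split_level x y" n ancestor x y] split_level_spec[OF assms]
  by blast+

lemma level_embedding_distortion:
  "bilipschitz (spdist (layered_edges n) edge_weight) (diamond_vertices n) ell2_dist
     (level_embedding n ancestor) \<and>
   distortion (spdist (layered_edges n) edge_weight) (diamond_vertices n) ell2_dist
     (level_embedding n ancestor) \<le> 2 * 4"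
proof (rule bilipschitz_distortion_le)
  show "pole False \<in> diamond_vertices n" "pole True \<in> diamond_vertices n" "pole False \<noteq> pole True"
    by (simp_all add: pole_mem)
  show "ell2_dist z z = 0" for z
    by (simp add: ell2_dist_def)
  fix x y
  assume xy: "x \<in> diamond_vertices n" "y \<in> diamond_vertices n" "x \<noteq> y"
  note d = spdist_split_level_bounds[OF xy] and e = ell2_dist_split_level_bounds[OF xy]
  have "0 < (1/2::real) ^ split_level x y"
    by simp
  with d(1) e(1) show "0 < spdist (layered_edges n) edge_weight x y \<and>
      0 < ell2_dist (level_embedding n ancestor x) (level_embedding n ancestor y)"
    by linarith
  show "ell2_dist (level_embedding n ancestor x) (level_embedding n ancestor y) \<le>
      2 * spdist (layered_edges n) edge_weight x y"
    using d(1) e(2) by linarith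
  show "spdist (layered_edges n) edge_weight x y \<le>
      4 * ell2_dist (level_embedding n ancestor x) (level_embedding n ancestor y)"
    using d(2) e(1) by linarith
qed

theorem theoremT:
  shows "\<exists>(V :: nat \<Rightarrow> nat set) (E :: nat \<Rightarrow> nat set set) (w :: nat \<Rightarrow> nat set \<Rightarrow> real).
    (\<forall>n\<ge>1. series_parallel (V n) (E n) (w n) \<and> connected_graph (V n) (E n) \<and>
            contains_diamond n (V n) (E n)) \<and>
    (\<exists>C :: real. \<exists>f :: nat \<Rightarrow> nat \<Rightarrow> (nat \<Rightarrow> real). \<forall>n\<ge>1.
        (\<forall>u\<in>V n. f n u \<in> ell2) \<and>
        bilipschitz (spdist (E n) (w n)) (V n) ell2_dist (f n) \<and>
        distortion (spdist (E n) (w n)) (V n) ell2_dist (f n) \<le> C)"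
proof -
  have "series_parallel (diamond_vertices n) (layered_edges n) edge_weight" for n
    unfolding series_parallel_def wgraph_def
    using finite_diamond_vertices layered_edge_shape sp_full_layered
    by (auto simp: edge_weight_def) blast+
  moreover have "connected_graph (diamond_vertices n) (layered_edges n)" for n
    unfolding connected_graph_def using exists_short_walk walk_singleton by metis
  moreover have "contains_diamond n (diamond_vertices n) (layered_edges n)" for n
    unfolding contains_diamond_def layered_edges_def using is_diamond_diamond by blast
  moreover note level_embedding_distortion
  ultimately show ?thesis
    using level_embedding_in_ell2
    by (intro exI[of _ diamond_vertices] exI[of _ layered_edges] exI[of _ "\<lambda>_. edge_weight"]
        conjI exI[of _ "2 * 4"] exI[of _ "\<lambda>n. level_embedding n ancestor"]) auto
qed

end
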